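(* Let $K\geqslant 1$ and $f\in\mathrm{HQR}_K(\mathbb{U},\mathbb{S})$. Then $$d_{\mathbb{S}}(f(z_1),f(z_2))\leqslant K\, d_{\mathbb{U}}(z_1,z_2)\quad\text{for all } z_1,z_2\in\mathbb{U}.$$
   Context: $\mathbb{U}=\{z\in\mathbb{C}:|z|<1\}$, $\mathbb{S}=\{z\in\mathbb{C}:-1<\operatorname{Re} z<1\}$. For a hyperbolic domain $\Omega$ with density $\rho_\Omega$, $d_\Omega(z_1,z_2)=\inf_\gamma\int_\gamma\rho_\Omega(z)|dz|$ over $C^1$ curves in $\Omega$ joining $z_1$ to $z_2$; here $\rho_{\mathbb{U}}(z)=\frac{2}{1-|z|^2}$ and $\rho_{\mathbb{S}}(z)=\frac{\pi}{2}\big/\cos\left(\frac{\pi}{2}\operatorname{Re} z\right)$. For domains $D,G\subset\mathbb{C}$, $\mathrm{HQR}_K(D,G)$ denotes the class of complex-valued harmonic $C^1$ maps $f:D\to G$ that are sense-preserving $K$-quasiregular, i.e. $|f_z(z)|>|f_{\bar z}(z)|$ and $\frac{|f_z(z)|+|f_{\bar z}(z)|}{|f_z(z)|-|f_{\bar z}(z)|}\leqslant K$ for all $z\in D$. *)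

theory Defs
  imports "HOL-Analysis.Analysis"
begin

definition unit_disc :: "complex set" where
  "unit_disc = {z. cmod z < 1}"

definition strip_S :: "complex set" where
  "strip_S = {z. -1 < Re z \<and> Re z < 1}"

definition rho_U :: "complex \<Rightarrow> real" where
  "rho_U z = 2 / (1 - (cmod z)\<^sup>2)"

definition rho_S :: "complex \<Rightarrow> real" where
  "rho_S z = (pi / 2) / cos (pi / 2 * Re z)"

definition hyp_dist :: "complex set \<Rightarrow> (complex \<Rightarrow> real) \<Rightarrow> complex \<Rightarrow> complex \<Rightarrow> real" where
  "hyp_dist \<Omega> \<rho> z1 z2 =
     (INF \<gamma> \<in> {\<gamma>. \<gamma> C1_differentiable_on {0..1} \<and> \<gamma> ` {0..1} \<subseteq> \<Omega>
                  \<and> \<gamma> 0 = z1 \<and> \<gamma> 1 = z2}.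
        integral {0..1} (\<lambda>t. \<rho> (\<gamma> t) * cmod (vector_derivative \<gamma> (at t within {0..1}))))"

definition dx :: "(complex \<Rightarrow> complex) \<Rightarrow> complex \<Rightarrow> complex" where
  "dx f z = vector_derivative (\<lambda>t::real. f (z + of_real t)) (at 0)"

definition dy :: "(complex \<Rightarrow> complex) \<Rightarrow> complex \<Rightarrow> complex" where
  "dy f z = vector_derivative (\<lambda>t::real. f (z + \<i> * of_real t)) (at 0)"

definition dz :: "(complex \<Rightarrow> complex) \<Rightarrow> complex \<Rightarrow> complex" where
  "dz f z = (dx f z - \<i> * dy f z) / 2"

definition dzbar :: "(complex \<Rightarrow> complex) \<Rightarrow> complex \<Rightarrow> complex" where
  "dzbar f z = (dx f z + \<i> * dy f z) / 2"

definition harmonic_on :: "(complex \<Rightarrow> complex) \<Rightarrow> complex set \<Rightarrow> bool" where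
  "harmonic_on f D \<longleftrightarrow>
     (\<forall>z\<in>D. f differentiable (at z)) \<and>
     (\<forall>z\<in>D. dx f differentiable (at z) \<and> dy f differentiable (at z)) \<and>
     continuous_on D (dx (dx f)) \<and> continuous_on D (dy (dx f)) \<and>
     continuous_on D (dx (dy f)) \<and> continuous_on D (dy (dy f)) \<and>
     (\<forall>z\<in>D. dx (dx f) z + dy (dy f) z = 0)"

definition HQR :: "real \<Rightarrow> complex set \<Rightarrow> complex set \<Rightarrow> (complex \<Rightarrow> complex) set" where
  "HQR K D G = {f. harmonic_on f D \<and> f ` D \<subseteq> G \<and>
      continuous_on D (dx f) \<and> continuous_on D (dy f) \<and>
      (\<forall>z\<in>D. cmod (dz f z) > cmod (dzbar f z) \<and>
         (cmod (dz f z) + cmod (dzbar f z)) / (cmod (dz f z) - cmod (dzbar f z)) \<le> K)}"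

end

theory Submission
  imports Defs "HOL-Complex_Analysis.Complex_Analysis"
begin

(* Write u = Re f. As u is harmonic, u_x - i u_y is holomorphic (this needs the symmetry of the
   mixed partials of u, which follows from the mean value theorem), so on the disc u = Re F for a
   holomorphic F with F' = u_x - i u_y = f_z + cnj f_zbar. F maps into the strip, which only
   constrains real parts. For the conformal map Phi = strip_to_disc of the strip onto the disc,
   rho_S = (rho_U o Phi) |Phi'|, so the Schwarz-Pick lemma for Phi o F yields
   rho_S (f z) |f_z + cnj f_zbar| <= rho_U z. Quasiregularity gives
   |f_z| + |f_zbar| <= K (|f_z| - |f_zbar|) <= K |f_z + cnj f_zbar|, and |f_z| + |f_zbar| bounds
   the stretching of f. Hence f maps every C1 curve in the disc to a curve in the strip of at most
   K times its hyperbolic length, and taking infima gives the inequality. *)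

definition partial_along :: "complex \<Rightarrow> (complex \<Rightarrow> complex) \<Rightarrow> complex \<Rightarrow> complex" where
  "partial_along d f z = vector_derivative (\<lambda>t::real. f (z + of_real t * d)) (at 0)"

lemma dx_eq_partial_along: "dx = partial_along 1"
  by (intro ext) (simp add: dx_def partial_along_def)

lemma dy_eq_partial_along: "dy = partial_along \<i>"
  by (intro ext) (simp add: dy_def partial_along_def mult.commute)

lemma has_vector_derivative_along_line:
  assumes "(f has_derivative L) (at (w + of_real s * d))"
  shows "((\<lambda>t::real. f (w + of_real t * d)) has_vector_derivative L d) (at s)"
proof -
  have "bounded_linear (\<lambda>t::real. of_real t * d)"
    unfolding scaleR_conv_of_real[symmetric] by (rule bounded_linear_scaleR_left)
  then have "((\<lambda>t::real. w + of_real t * d) has_derivative (\<lambda>t. of_real t * d)) (at s)"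
    by (auto intro!: derivative_eq_intros bounded_linear_imp_has_derivative)
  from has_derivative_compose[OF this assms]
  have "((\<lambda>t::real. f (w + of_real t * d)) has_derivative (\<lambda>t. L (of_real t * d))) (at s)"
    by (simp add: o_def)
  moreover have "(\<lambda>t. L (of_real t * d)) = (\<lambda>t. t *\<^sub>R L d)"
    using has_derivative_linear[OF assms] by (metis linear_scale scaleR_conv_of_real)
  ultimately show ?thesis by (simp add: has_vector_derivative_def)
qed

lemma partial_along_eq:
  assumes "(f has_derivative L) (at w)"
  shows "partial_along d f w = L d"
  using has_vector_derivative_along_line[of f L w 0 d] assms
  by (simp add: partial_along_def vector_derivative_at)

lemma has_real_derivative_Re_along_line:
  assumes "f differentiable at (w + of_real s * d)"
  shows "((\<lambda>t. Re (f (w + of_real t * d))) has_real_derivative Re (partial_along d f (w + of_real s * d))) (at s)"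
proof -
  obtain L where L: "(f has_derivative L) (at (w + of_real s * d))"
    using assms unfolding differentiable_def by blast
  have "((\<lambda>t. Re (f (w + of_real t * d))) has_derivative (\<lambda>t. Re (t *\<^sub>R L d))) (at s)"
    using has_derivative_Re[OF has_vector_derivative_along_line[OF L, unfolded has_vector_derivative_def]] .
  moreover have "(\<lambda>t. Re (t *\<^sub>R L d)) = (*) (Re (partial_along d f (w + of_real s * d)))"
    by (auto simp: partial_along_eq[OF L])
  ultimately show ?thesis
    by (simp add: has_field_derivative_def)
qed

lemma has_derivative_eq_partials:
  assumes "(f has_derivative L) (at w)"
  shows "L v = of_real (Re v) * dx f w + of_real (Im v) * dy f w"
proof -
  have "v = Re v *\<^sub>R 1 + Im v *\<^sub>R \<i>"
    by (simp add: complex_eq_iff)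
  then have "L v = L (Re v *\<^sub>R 1 + Im v *\<^sub>R \<i>)"
    by simp
  also have "\<dots> = Re v *\<^sub>R L 1 + Im v *\<^sub>R L \<i>"
    using has_derivative_linear[OF assms] by (simp add: linear_add linear_scale)
  finally show ?thesis
    by (simp add: scaleR_conv_of_real dx_eq_partial_along dy_eq_partial_along partial_along_eq[OF assms])
qed

lemma partials_eq_Wirtinger:
  "of_real (Re v) * dx f w + of_real (Im v) * dy f w = dz f w * v + dzbar f w * cnj v"
  unfolding dz_def dzbar_def by (simp add: complex_eq_iff field_simps)

section \<open>Symmetry of mixed partial derivatives\<close>

definition second_difference :: "complex \<Rightarrow> complex \<Rightarrow> (complex \<Rightarrow> complex) \<Rightarrow> complex \<Rightarrow> real \<Rightarrow> real" where
  "second_difference a b f z h =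
     Re (f (z + of_real h * a + of_real h * b)) - Re (f (z + of_real h * b))
       - Re (f (z + of_real h * a)) + Re (f z)"

lemma second_difference_commute: "second_difference a b f z h = second_difference b a f z h"
  unfolding second_difference_def by (simp add: add_ac)

lemma second_difference_mean_value:
  assumes "0 < h"
    and square: "\<And>s t. 0 \<le> s \<Longrightarrow> s \<le> h \<Longrightarrow> 0 \<le> t \<Longrightarrow> t \<le> h \<Longrightarrow> z + of_real s * a + of_real t * b \<in> D"
    and f: "\<And>w. w \<in> D \<Longrightarrow> f differentiable at w"
    and fa: "\<And>w. w \<in> D \<Longrightarrow> partial_along a f differentiable at w"
  obtains \<xi> \<eta> where "0 < \<xi>" "\<xi> < h" "0 < \<eta>" "\<eta> < h"
    "second_difference a b f z h = h\<^sup>2 * Re (partial_along b (partial_along a f) (z + of_real \<xi> * a + of_real \<eta> * b))"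
proof -
  define A where "A t = Re (f (z + of_real h * b + of_real t * a)) - Re (f (z + of_real t * a))" for t
  define A' where "A' t = Re (partial_along a f (z + of_real h * b + of_real t * a)) - Re (partial_along a f (z + of_real t * a))" for t
  have "\<exists>\<xi>. 0 < \<xi> \<and> \<xi> < h \<and> A h - A 0 = (h - 0) * A' \<xi>"
  proof (rule MVT2[OF \<open>0 < h\<close>])
    fix t assume t: "0 \<le> t" "t \<le> h"
    have "z + of_real h * b + of_real t * a \<in> D" "z + of_real t * a \<in> D"
      using square[of t h] square[of t 0] t \<open>0 < h\<close> by (simp_all add: add_ac)
    then show "(A has_real_derivative A' t) (at t)"
      unfolding A_def[abs_def] A'_def by (intro DERIV_diff has_real_derivative_Re_along_line f)
  qed
  then obtain \<xi> where \<xi>: "0 < \<xi>" "\<xi> < h" and "A h - A 0 = h * A' \<xi>"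
    by auto
  moreover have "\<exists>\<eta>. 0 < \<eta> \<and> \<eta> < h \<and>
      Re (partial_along a f (z + of_real \<xi> * a + of_real h * b)) - Re (partial_along a f (z + of_real \<xi> * a + of_real 0 * b))
        = (h - 0) * Re (partial_along b (partial_along a f) (z + of_real \<xi> * a + of_real \<eta> * b))"
  proof (rule MVT2[OF \<open>0 < h\<close>])
    fix t assume "0 \<le> t" "t \<le> h"
    then show "((\<lambda>t. Re (partial_along a f (z + of_real \<xi> * a + of_real t * b))) has_real_derivative
        Re (partial_along b (partial_along a f) (z + of_real \<xi> * a + of_real t * b))) (at t)"
      using \<xi> by (intro has_real_derivative_Re_along_line fa square) auto
  qed
  then obtain \<eta> where "0 < \<eta>" "\<eta> < h" and
    "Re (partial_along a f (z + of_real \<xi> * a + of_real h * b)) - Re (partial_along a f (z + of_real \<xi> * a))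
       = h * Re (partial_along b (partial_along a f) (z + of_real \<xi> * a + of_real \<eta> * b))"
    by auto
  moreover have "second_difference a b f z h = A h - A 0"
    unfolding second_difference_def A_def by (simp add: add_ac)
  ultimately show ?thesis
    using that[OF \<xi> \<open>0 < \<eta>\<close> \<open>\<eta> < h\<close>] by (simp add: A'_def add_ac power2_eq_square)
qed

lemma second_difference_quotient_tendsto:
  assumes "open D" "z \<in> D" "cmod a \<le> 1" "cmod b \<le> 1"
    and f: "\<And>w. w \<in> D \<Longrightarrow> f differentiable at w"
    and fa: "\<And>w. w \<in> D \<Longrightarrow> partial_along a f differentiable at w"
    and cont: "isCont (partial_along b (partial_along a f)) z"
  shows "((\<lambda>h. second_difference a b f z h / h\<^sup>2) \<longlongrightarrow> Re (partial_along b (partial_along a f) z)) (at_right 0)"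
proof (rule tendstoI)
  fix e :: real assume "e > 0"
  let ?g = "partial_along b (partial_along a f)"
  obtain r1 where "r1 > 0" and r1: "\<And>w. dist w z < r1 \<Longrightarrow> dist (?g w) (?g z) < e"
    using cont \<open>e > 0\<close> unfolding continuous_at_eps_delta by metis
  obtain r2 where "r2 > 0" "ball z r2 \<subseteq> D"
    using assms(1,2) openE by blast
  define r where "r = min r1 r2"
  have near: "dist (z + of_real s * a + of_real t * b) z < r"
    if "0 \<le> s" "0 \<le> t" "s + t < r" for s t
  proof -
    have "dist (z + of_real s * a + of_real t * b) z = cmod (of_real s * a + of_real t * b)"
      by (simp add: dist_norm)
    also have "\<dots> \<le> s * cmod a + t * cmod b"
      using norm_triangle_ineq[of "of_real s * a" "of_real t * b"] that by (simp add: norm_mult)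
    also have "\<dots> \<le> s + t"
      using assms(3,4) that by (intro add_mono mult_left_le) auto
    finally show ?thesis using that by simp
  qed
  have "0 < r / 2"
    using \<open>r1 > 0\<close> \<open>r2 > 0\<close> by (simp add: r_def)
  show "\<forall>\<^sub>F h in at_right 0. dist (second_difference a b f z h / h\<^sup>2) (Re (?g z)) < e"
    using eventually_at_right_real[OF \<open>0 < r / 2\<close>]
  proof (rule eventually_mono)
    fix h assume h: "h \<in> {0<..<r / 2}"
    have square: "z + of_real s * a + of_real t * b \<in> D"
      if "0 \<le> s" "s \<le> h" "0 \<le> t" "t \<le> h" for s t
      using near[of s t] that h \<open>ball z r2 \<subseteq> D\<close> by (auto simp: r_def dist_commute)
    obtain \<xi> \<eta> where "0 < \<xi>" "\<xi> < h" "0 < \<eta>" "\<eta> < h" and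
      eq: "second_difference a b f z h = h\<^sup>2 * Re (?g (z + of_real \<xi> * a + of_real \<eta> * b))"
      by (rule second_difference_mean_value[OF _ square f fa]) (use h in auto)
    then have "dist (?g (z + of_real \<xi> * a + of_real \<eta> * b)) (?g z) < e"
      using h near[of \<xi> \<eta>] by (intro r1) (auto simp: r_def)
    then show "dist (second_difference a b f z h / h\<^sup>2) (Re (?g z)) < e"
      using h eq abs_Re_le_cmod[of "?g (z + of_real \<xi> * a + of_real \<eta> * b) - ?g z"]
      by (simp add: dist_norm dist_real_def)
  qed
qed

lemma Re_partial_along_commute:
  assumes "open D" "z \<in> D" "cmod a \<le> 1" "cmod b \<le> 1"
    and "\<And>w. w \<in> D \<Longrightarrow> f differentiable at w"
    and "\<And>w. w \<in> D \<Longrightarrow> partial_along a f differentiable at w"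
    and "\<And>w. w \<in> D \<Longrightarrow> partial_along b f differentiable at w"
    and "isCont (partial_along b (partial_along a f)) z"
    and "isCont (partial_along a (partial_along b f)) z"
  shows "Re (partial_along b (partial_along a f) z) = Re (partial_along a (partial_along b f) z)"
  using second_difference_quotient_tendsto[of D z a b f] second_difference_quotient_tendsto[of D z b a f]
  unfolding second_difference_commute[of b a] using assms
  by (intro tendsto_unique[OF trivial_limit_at_right_real]) auto

lemma harmonic_on_Re_mixed_partials:
  assumes "open D" "harmonic_on f D" "z \<in> D"
  shows "Re (dy (dx f) z) = Re (dx (dy f) z)"
proof -
  have "isCont (dy (dx f)) z" "isCont (dx (dy f)) z"
    using assms continuous_on_eq_continuous_at unfolding harmonic_on_def by blast+
  moreover have "f differentiable at w" "dx f differentiable at w" "dy f differentiable at w"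
    if "w \<in> D" for w
    using assms(2) that unfolding harmonic_on_def by auto
  ultimately show ?thesis
    unfolding dx_eq_partial_along dy_eq_partial_along
    by (intro Re_partial_along_commute[OF assms(1,3)]) auto
qed

section \<open>Harmonic functions as real parts of holomorphic functions\<close>

(* u_x - i u_y for u = Re f, i.e. 2 u_z *)
definition conj_grad_Re :: "(complex \<Rightarrow> complex) \<Rightarrow> complex \<Rightarrow> complex" where
  "conj_grad_Re f z = of_real (Re (dx f z)) - \<i> * of_real (Re (dy f z))"

lemma conj_grad_Re_eq_Wirtinger: "conj_grad_Re f z = dz f z + cnj (dzbar f z)"
  unfolding conj_grad_Re_def dz_def dzbar_def by (simp add: complex_eq_iff field_simps)

lemma harmonic_on_conj_grad_Re_has_field_derivative:
  assumes "open D" "harmonic_on f D" "z \<in> D"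
  shows "(conj_grad_Re f has_field_derivative conj_grad_Re (dx f) z) (at z)"
proof -
  obtain L1 L2 where L1: "(dx f has_derivative L1) (at z)" and L2: "(dy f has_derivative L2) (at z)"
    using assms unfolding harmonic_on_def differentiable_def by blast
  have laplace: "Re (dy (dy f) z) = - Re (dx (dx f) z)"
  proof -
    have "dx (dx f) z + dy (dy f) z = 0"
      using assms unfolding harmonic_on_def by blast
    then show ?thesis
      by (simp add: complex_eq_iff)
  qed
  have "(conj_grad_Re f has_derivative (\<lambda>v. of_real (Re (L1 v)) - \<i> * of_real (Re (L2 v)))) (at z)"
    unfolding conj_grad_Re_def[abs_def] by (intro derivative_intros L1 L2)
  moreover have "(\<lambda>v. of_real (Re (L1 v)) - \<i> * of_real (Re (L2 v))) = (\<lambda>v. conj_grad_Re (dx f) z * v)"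
  proof
    fix v
    show "of_real (Re (L1 v)) - \<i> * of_real (Re (L2 v)) = conj_grad_Re (dx f) z * v"
      unfolding has_derivative_eq_partials[OF L1] has_derivative_eq_partials[OF L2] conj_grad_Re_def
      using harmonic_on_Re_mixed_partials[OF assms] laplace by (simp add: complex_eq_iff algebra_simps)
  qed
  ultimately show ?thesis
    by (simp add: has_field_derivative_def)
qed

lemma harmonic_on_Re_primitive:
  assumes "convex D" "open D" "harmonic_on f D"
  obtains F where "\<And>z. z \<in> D \<Longrightarrow> (F has_field_derivative conj_grad_Re f z) (at z)"
    and "\<And>z. z \<in> D \<Longrightarrow> Re (F z) = Re (f z)"
proof -
  have "conj_grad_Re f holomorphic_on D"
    using harmonic_on_conj_grad_Re_has_field_derivative[OF assms(2,3)]
    by (meson field_differentiable_at_within field_differentiable_def holomorphic_on_def)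
  then obtain g where g_within: "\<And>z. z \<in> D \<Longrightarrow> (g has_field_derivative conj_grad_Re f z) (at z within D)"
    using holomorphic_convex_primitive'[OF assms(1,2)] by blast
  have g: "(g has_field_derivative conj_grad_Re f z) (at z)" if "z \<in> D" for z
    using g_within[OF that] at_within_open[OF that assms(2)] by simp
  have Re_diff_deriv: "((\<lambda>z. Re (g z) - Re (f z)) has_derivative (\<lambda>v. 0)) (at z within D)"
    if z: "z \<in> D" for z
  proof -
    obtain L where L: "(f has_derivative L) (at z)"
      using assms(3) z unfolding harmonic_on_def differentiable_def by blast
    have "((\<lambda>z. Re (g z) - Re (f z)) has_derivative (\<lambda>v. Re (conj_grad_Re f z * v) - Re (L v))) (at z)"
      using has_derivative_diff[OF has_derivative_Re has_derivative_Re, OF has_field_derivative_imp_has_derivative[OF g[OF z]] L] .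
    moreover have "(\<lambda>v. Re (conj_grad_Re f z * v) - Re (L v)) = (\<lambda>v. 0)"
      by (rule ext) (simp add: has_derivative_eq_partials[OF L] conj_grad_Re_def algebra_simps)
    ultimately show ?thesis
      by (metis has_derivative_at_withinI)
  qed
  obtain c where c: "\<And>z. z \<in> D \<Longrightarrow> Re (g z) - Re (f z) = c"
    using has_derivative_zero_constant[OF assms(1) Re_diff_deriv] by blast
  show ?thesis
  proof (rule that[of "\<lambda>z. g z - of_real c"])
    show "((\<lambda>z. g z - of_real c) has_field_derivative conj_grad_Re f z) (at z)" if "z \<in> D" for z
      using DERIV_diff[OF g[OF that] DERIV_const[of "of_real c"]] by simp
    show "Re (g z - of_real c) = Re (f z)" if "z \<in> D" for z
      using c[OF that] by simp
  qed
qed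

section \<open>The Schwarz-Pick lemma\<close>

lemma Moebius_function_has_field_derivative:
  assumes "cnj w * z \<noteq> 1"
  shows "(Moebius_function 0 w has_field_derivative of_real (1 - (cmod w)\<^sup>2) / (1 - cnj w * z)\<^sup>2) (at z)"
proof -
  have "((\<lambda>x. x - w) has_field_derivative 1) (at z)"
    by (auto intro!: derivative_eq_intros)
  moreover have "((\<lambda>x. 1 - cnj w * x) has_field_derivative - cnj w) (at z)"
    by (auto intro!: derivative_eq_intros)
  ultimately have "((\<lambda>z. (z - w) / (1 - cnj w * z)) has_field_derivative
      (1 * (1 - cnj w * z) - (z - w) * - cnj w) / ((1 - cnj w * z) * (1 - cnj w * z))) (at z)"
    using assms by (intro DERIV_divide) auto
  moreover have "1 * (1 - cnj w * z) - (z - w) * - cnj w = of_real (1 - (cmod w)\<^sup>2)"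
    using complex_norm_square[of w] by (simp add: algebra_simps)
  moreover have "Moebius_function 0 w = (\<lambda>z. (z - w) / (1 - cnj w * z))"
    by (rule ext) (rule Moebius_function_simple)
  ultimately show ?thesis
    by (simp only: power2_eq_square)
qed

lemma Moebius_function_has_field_derivative_self:
  assumes "cmod a < 1"
  shows "(Moebius_function 0 a has_field_derivative 1 / of_real (1 - (cmod a)\<^sup>2)) (at a)"
proof -
  have "1 - cnj a * a = of_real (1 - (cmod a)\<^sup>2)"
    using complex_norm_square[of a] by (simp add: mult.commute)
  moreover have "of_real (1 - (cmod a)\<^sup>2) \<noteq> (0 :: complex)"
  proof -
    have "(cmod a)\<^sup>2 < 1"
      using assms by (simp add: abs_square_less_1)
    then show ?thesis
      by (simp only: of_real_eq_0_iff)
  qed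
  ultimately show ?thesis
    using Moebius_function_has_field_derivative[of a a] by (simp add: power2_eq_square)
qed

lemma Schwarz_Pick:
  assumes holG: "G holomorphic_on ball 0 1" and G: "G ` ball 0 1 \<subseteq> ball 0 1"
    and z: "z \<in> ball 0 1"
  shows "cmod (deriv G z) * (1 - (cmod z)\<^sup>2) \<le> 1 - (cmod (G z))\<^sup>2"
proof -
  define a where "a = G z"
  have "cmod a < 1" "cmod z < 1"
    using G z by (auto simp: a_def image_subset_iff)
  then have "(cmod a)\<^sup>2 < 1" "(cmod z)\<^sup>2 < 1"
    by (simp_all add: abs_square_less_1)
  define N where "N = Moebius_function 0 (- z)"
  define M where "M = Moebius_function 0 a"
  define H where "H = M \<circ> (G \<circ> N)"
  have N: "N ` ball 0 1 \<subseteq> ball 0 1"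
    using Moebius_function_norm_lt_1[of "- z" _ 0] \<open>cmod z < 1\<close> by (auto simp: N_def)
  have "N 0 = z"
    by (simp add: N_def Moebius_function_of_zero)
  have "(G \<circ> N) holomorphic_on ball 0 1"
    using Moebius_function_holomorphic[of "- z" 0] \<open>cmod z < 1\<close> N holG
    unfolding N_def by (intro holomorphic_on_compose_gen) auto
  moreover have "(G \<circ> N) ` ball 0 1 \<subseteq> ball 0 1"
    using N G by auto
  ultimately have "H holomorphic_on ball 0 1"
    unfolding H_def M_def
    by (rule holomorphic_on_compose_gen[OF _ Moebius_function_holomorphic[OF \<open>cmod a < 1\<close>]])
  moreover have "H 0 = 0"
    by (simp add: H_def \<open>N 0 = z\<close> M_def a_def Moebius_function_eq_zero)
  moreover have "cmod (H \<zeta>) < 1" if "cmod \<zeta> < 1" for \<zeta>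
  proof -
    have "cmod (G (N \<zeta>)) < 1"
      using N G that by (auto simp: image_subset_iff)
    then show ?thesis
      using Moebius_function_norm_lt_1[OF \<open>cmod a < 1\<close>] by (simp add: H_def M_def)
  qed
  ultimately have "cmod (deriv H 0) \<le> 1"
    using Schwarz_Lemma(2)[of H 0] by simp
  have "(M has_field_derivative 1 / of_real (1 - (cmod a)\<^sup>2)) (at ((G \<circ> N) 0))"
    using Moebius_function_has_field_derivative_self[OF \<open>cmod a < 1\<close>]
    by (simp add: M_def \<open>N 0 = z\<close> a_def[symmetric])
  moreover have "(N has_field_derivative of_real (1 - (cmod z)\<^sup>2)) (at 0)"
    using Moebius_function_has_field_derivative[of "- z" 0] by (simp add: N_def)
  then have "((G \<circ> N) has_field_derivative deriv G z * of_real (1 - (cmod z)\<^sup>2)) (at 0)"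
    using DERIV_chain holomorphic_derivI[OF holG open_ball z] \<open>N 0 = z\<close> by metis
  ultimately have "(H has_field_derivative
      1 / of_real (1 - (cmod a)\<^sup>2) * (deriv G z * of_real (1 - (cmod z)\<^sup>2))) (at 0)"
    unfolding H_def by (rule DERIV_chain)
  then have "cmod (deriv H 0) = 1 / \<bar>1 - (cmod a)\<^sup>2\<bar> * (cmod (deriv G z) * \<bar>1 - (cmod z)\<^sup>2\<bar>)"
    by (simp only: DERIV_imp_deriv norm_mult norm_divide norm_of_real norm_one)
  then have "cmod (deriv H 0) = cmod (deriv G z) * (1 - (cmod z)\<^sup>2) / (1 - (cmod a)\<^sup>2)"
    using \<open>(cmod a)\<^sup>2 < 1\<close> \<open>(cmod z)\<^sup>2 < 1\<close> by simp
  with \<open>cmod (deriv H 0) \<le> 1\<close> \<open>(cmod a)\<^sup>2 < 1\<close> show ?thesis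
    by (simp add: a_def divide_le_eq)
qed

lemma unit_disc_eq_ball: "unit_disc = ball 0 1"
  by (auto simp: unit_disc_def)

lemma rho_U_Schwarz_Pick:
  assumes "G holomorphic_on ball 0 1" "G ` ball 0 1 \<subseteq> ball 0 1" "z \<in> ball 0 1"
  shows "rho_U (G z) * cmod (deriv G z) \<le> rho_U z"
proof -
  have "cmod (G z) < 1" "cmod z < 1"
    using assms(2,3) by (auto simp: image_subset_iff)
  then have "1 - (cmod (G z))\<^sup>2 > 0" "1 - (cmod z)\<^sup>2 > 0"
    by (simp_all add: abs_square_less_1)
  then show ?thesis
    using Schwarz_Pick[OF assms] by (simp add: rho_U_def field_simps)
qed

section \<open>A conformal map of the strip onto the disc\<close>

(* i tan (pi w / 4) *)
definition strip_to_disc :: "complex \<Rightarrow> complex" where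
  "strip_to_disc w = (exp (\<i> * of_real (pi / 2) * w) - 1) / (exp (\<i> * of_real (pi / 2) * w) + 1)"

lemma strip_S_cos_pos:
  assumes "w \<in> strip_S"
  shows "cos (pi / 2 * Re w) > 0"
proof -
  have "pi * -1 < pi * Re w" "pi * Re w < pi * 1"
    using assms by (simp_all only: strip_S_def mem_Collect_eq mult_less_cancel_left_pos pi_gt_zero)
  then show ?thesis
    by (intro cos_gt_zero_pi) auto
qed

lemma rho_S_pos: "w \<in> strip_S \<Longrightarrow> rho_S w > 0"
  using strip_S_cos_pos by (simp add: rho_S_def)

lemma strip_S_Re_exp_pos:
  assumes "w \<in> strip_S"
  shows "Re (exp (\<i> * of_real (pi / 2) * w)) > 0"
  using strip_S_cos_pos[OF assms] by (simp add: Re_exp)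

lemma strip_S_exp_plus_one_nonzero:
  assumes "w \<in> strip_S"
  shows "exp (\<i> * of_real (pi / 2) * w) + 1 \<noteq> 0"
proof -
  have "Re (exp (\<i> * of_real (pi / 2) * w) + 1) > 0"
    using strip_S_Re_exp_pos[OF assms] by simp
  then show ?thesis
    by (metis less_irrefl zero_complex.sel(1))
qed

lemma strip_to_disc_has_field_derivative:
  assumes "w \<in> strip_S"
  defines "E \<equiv> exp (\<i> * of_real (pi / 2) * w)"
  shows "(strip_to_disc has_field_derivative \<i> * of_real pi * E / (E + 1)\<^sup>2) (at w)"
proof -
  have "E + 1 \<noteq> 0"
    unfolding E_def by (rule strip_S_exp_plus_one_nonzero[OF assms(1)])
  have E': "((\<lambda>w. exp (\<i> * of_real (pi / 2) * w)) has_field_derivative \<i> * of_real (pi / 2) * E) (at w)"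
    unfolding E_def by (auto intro!: derivative_eq_intros)
  have "((\<lambda>w. (exp (\<i> * of_real (pi / 2) * w) - 1) / (exp (\<i> * of_real (pi / 2) * w) + 1)) has_field_derivative
      ((\<i> * of_real (pi / 2) * E) * (E + 1) - (E - 1) * (\<i> * of_real (pi / 2) * E)) / ((E + 1) * (E + 1))) (at w)"
    using DERIV_divide[OF DERIV_diff[OF E' DERIV_const] DERIV_add[OF E' DERIV_const]] \<open>E + 1 \<noteq> 0\<close>
    unfolding E_def by simp
  moreover have "(\<i> * of_real (pi / 2) * E) * (E + 1) - (E - 1) * (\<i> * of_real (pi / 2) * E) = \<i> * of_real pi * E"
    by (simp add: field_simps)
  ultimately show ?thesis
    by (simp add: strip_to_disc_def[abs_def] power2_eq_square)
qed

lemma one_minus_norm_strip_to_disc_sq: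
  assumes "w \<in> strip_S"
  defines "E \<equiv> exp (\<i> * of_real (pi / 2) * w)"
  shows "1 - (cmod (strip_to_disc w))\<^sup>2 = 4 * Re E / (cmod (E + 1))\<^sup>2"
proof -
  have "(cmod (E + 1))\<^sup>2 = (Re E + 1)\<^sup>2 + (Im E)\<^sup>2" "(cmod (E - 1))\<^sup>2 = (Re E - 1)\<^sup>2 + (Im E)\<^sup>2"
    by (simp_all add: cmod_power2)
  moreover have "(cmod (E + 1))\<^sup>2 > 0"
    using strip_S_exp_plus_one_nonzero[OF assms(1)] unfolding E_def by simp
  ultimately show ?thesis
    unfolding strip_to_disc_def E_def[symmetric] norm_divide power_divide
    by (simp add: field_simps power2_eq_square)
qed

lemma strip_to_disc_in_disc:
  assumes "w \<in> strip_S"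
  shows "strip_to_disc w \<in> ball 0 1"
proof -
  have "4 * Re (exp (\<i> * of_real (pi / 2) * w)) / (cmod (exp (\<i> * of_real (pi / 2) * w) + 1))\<^sup>2 > 0"
    using strip_S_Re_exp_pos[OF assms] strip_S_exp_plus_one_nonzero[OF assms] by simp
  then have "(cmod (strip_to_disc w))\<^sup>2 < 1"
    using one_minus_norm_strip_to_disc_sq[OF assms] by linarith
  then show ?thesis
    by (simp add: abs_square_less_1)
qed

lemma rho_S_eq_pullback_rho_U:
  assumes "w \<in> strip_S"
  shows "rho_S w = rho_U (strip_to_disc w) * cmod (deriv strip_to_disc w)"
proof -
  define E where "E = exp (\<i> * of_real (pi / 2) * w)"
  define n where "n = (cmod (E + 1))\<^sup>2"
  have "Re E > 0" "n > 0" "cmod E > 0"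
    using strip_S_Re_exp_pos[OF assms] strip_S_exp_plus_one_nonzero[OF assms]
    by (simp_all add: E_def n_def)
  have "cmod (deriv strip_to_disc w) = pi * cmod E / n"
    using DERIV_imp_deriv[OF strip_to_disc_has_field_derivative[OF assms]]
    by (simp add: E_def n_def norm_mult norm_divide norm_power)
  moreover have "rho_U (strip_to_disc w) = 2 / (4 * Re E / n)"
    unfolding rho_U_def one_minus_norm_strip_to_disc_sq[OF assms] E_def n_def ..
  ultimately have "rho_U (strip_to_disc w) * cmod (deriv strip_to_disc w) = 2 / (4 * Re E / n) * (pi * cmod E / n)"
    by simp
  also have "\<dots> = (pi / 2) / (Re E / cmod E)"
    using \<open>Re E > 0\<close> \<open>n > 0\<close> \<open>cmod E > 0\<close> by (simp add: field_simps)
  also have "\<dots> = rho_S w"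
    by (simp add: rho_S_def E_def Re_exp)
  finally show ?thesis ..
qed

lemma rho_S_conj_grad_Re_le_rho_U:
  assumes hf: "harmonic_on f (ball 0 1)" and fS: "f ` ball 0 1 \<subseteq> strip_S" and z: "z \<in> ball 0 1"
  shows "rho_S (f z) * cmod (conj_grad_Re f z) \<le> rho_U z"
proof -
  obtain F where F': "\<And>w. w \<in> ball 0 1 \<Longrightarrow> (F has_field_derivative conj_grad_Re f w) (at w)"
    and ReF: "\<And>w. w \<in> ball 0 1 \<Longrightarrow> Re (F w) = Re (f w)"
    using harmonic_on_Re_primitive[OF convex_ball open_ball hf] by blast
  have FS: "F w \<in> strip_S" if "w \<in> ball 0 1" for w
  proof -
    have "f w \<in> strip_S"
      using fS that by auto
    then show ?thesis
      using ReF[OF that] by (simp add: strip_S_def)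
  qed
  define G where "G = strip_to_disc \<circ> F"
  have G': "(G has_field_derivative deriv strip_to_disc (F w) * conj_grad_Re f w) (at w)"
    if "w \<in> ball 0 1" for w
  proof -
    have "(strip_to_disc has_field_derivative deriv strip_to_disc (F w)) (at (F w))"
      using strip_to_disc_has_field_derivative[OF FS[OF that]] DERIV_imp_deriv by metis
    then show ?thesis
      unfolding G_def by (rule DERIV_chain[OF _ F'[OF that]])
  qed
  have "G holomorphic_on ball 0 1"
    using G' by (meson field_differentiable_at_within field_differentiable_def holomorphic_on_def)
  moreover have "G ` ball 0 1 \<subseteq> ball 0 1"
    using strip_to_disc_in_disc FS by (auto simp: G_def)
  ultimately have "rho_U (G z) * cmod (deriv G z) \<le> rho_U z"
    using rho_U_Schwarz_Pick z by blast
  moreover have "rho_S (f z) = rho_S (F z)"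
    using ReF[OF z] by (simp add: rho_S_def)
  ultimately show ?thesis
    using rho_S_eq_pullback_rho_U[OF FS[OF z]] DERIV_imp_deriv[OF G'[OF z]]
    by (simp add: G_def norm_mult mult.assoc)
qed

lemma quasiregular_norm_le:
  fixes a b :: complex
  assumes "cmod b < cmod a" "(cmod a + cmod b) / (cmod a - cmod b) \<le> K"
  shows "cmod a + cmod b \<le> K * cmod (a + cnj b)"
proof -
  have "cmod a + cmod b \<le> K * (cmod a - cmod b)"
    using assms by (simp add: divide_le_eq)
  also have "\<dots> \<le> K * cmod (a + cnj b)"
  proof (rule mult_left_mono)
    show "cmod a - cmod b \<le> cmod (a + cnj b)"
      using norm_diff_ineq[of a "cnj b"] by simp
    show "0 \<le> K"
      using assms order.trans[OF _ assms(2), of 0] by simp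
  qed
  finally show ?thesis .
qed

lemma HQR_rho_S_max_stretch_le:
  assumes "0 \<le> K" "f \<in> HQR K unit_disc strip_S" "z \<in> unit_disc"
  shows "rho_S (f z) * (cmod (dz f z) + cmod (dzbar f z)) \<le> K * rho_U z"
proof -
  have "rho_S (f z) > 0"
    using assms rho_S_pos unfolding HQR_def by auto
  moreover have "cmod (dz f z) + cmod (dzbar f z) \<le> K * cmod (conj_grad_Re f z)"
    using assms unfolding HQR_def conj_grad_Re_eq_Wirtinger by (intro quasiregular_norm_le) auto
  ultimately have "rho_S (f z) * (cmod (dz f z) + cmod (dzbar f z)) \<le> K * (rho_S (f z) * cmod (conj_grad_Re f z))"
    by (simp add: mult.left_commute)
  also have "\<dots> \<le> K * rho_U z"
    using assms unfolding HQR_def unit_disc_eq_ball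
    by (intro mult_left_mono rho_S_conj_grad_Re_le_rho_U) auto
  finally show ?thesis .
qed

section \<open>Hyperbolic length of curves\<close>

definition C1_curves :: "complex set \<Rightarrow> complex \<Rightarrow> complex \<Rightarrow> (real \<Rightarrow> complex) set" where
  "C1_curves \<Omega> z1 z2 =
     {\<gamma>. \<gamma> C1_differentiable_on {0..1} \<and> \<gamma> ` {0..1} \<subseteq> \<Omega> \<and> \<gamma> 0 = z1 \<and> \<gamma> 1 = z2}"

definition hyp_length :: "(complex \<Rightarrow> real) \<Rightarrow> (real \<Rightarrow> complex) \<Rightarrow> real" where
  "hyp_length \<rho> \<gamma> = integral {0..1} (\<lambda>t. \<rho> (\<gamma> t) * cmod (vector_derivative \<gamma> (at t within {0..1})))"

lemma hyp_dist_eq_INF_hyp_length: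
  "hyp_dist \<Omega> \<rho> z1 z2 = (INF \<gamma> \<in> C1_curves \<Omega> z1 z2. hyp_length \<rho> \<gamma>)"
  unfolding hyp_dist_def C1_curves_def hyp_length_def ..

lemma linepath_in_C1_curves:
  assumes "convex \<Omega>" "z1 \<in> \<Omega>" "z2 \<in> \<Omega>"
  shows "linepath z1 z2 \<in> C1_curves \<Omega> z1 z2"
proof -
  have "linepath z1 z2 C1_differentiable_on {0..1}"
    unfolding linepath_def by (intro derivative_intros)
  then show ?thesis
    using closed_segment_subset[OF assms(2,3,1)]
    by (simp add: C1_curves_def linepath_image_01 pathstart_linepath[unfolded pathstart_def]
        pathfinish_linepath[unfolded pathfinish_def])
qed

lemma hyp_length_nonneg:
  assumes "\<And>w. w \<in> \<Omega> \<Longrightarrow> 0 \<le> \<rho> w" "\<gamma> \<in> C1_curves \<Omega> z1 z2"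
  shows "0 \<le> hyp_length \<rho> \<gamma>"
proof -
  have "0 \<le> \<rho> (\<gamma> t) * cmod (vector_derivative \<gamma> (at t within {0..1}))" if "t \<in> {0..1}" for t
    using assms that by (auto simp: C1_curves_def image_subset_iff)
  then show ?thesis
    unfolding hyp_length_def
    by (cases "(\<lambda>t. \<rho> (\<gamma> t) * cmod (vector_derivative \<gamma> (at t within {0..1}))) integrable_on {0..1}")
      (auto intro!: integral_nonneg simp: not_integrable_integral)
qed

lemma hyp_dist_le_of_hyp_length_le:
  assumes "K > 0" "C1_curves \<Omega>1 z1 z2 \<noteq> {}" "\<And>w. w \<in> \<Omega>2 \<Longrightarrow> 0 \<le> \<rho>2 w"
    and curves: "\<And>\<gamma>. \<gamma> \<in> C1_curves \<Omega>1 z1 z2 \<Longrightarrow>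
      f \<circ> \<gamma> \<in> C1_curves \<Omega>2 (f z1) (f z2) \<and> hyp_length \<rho>2 (f \<circ> \<gamma>) \<le> K * hyp_length \<rho>1 \<gamma>"
  shows "hyp_dist \<Omega>2 \<rho>2 (f z1) (f z2) \<le> K * hyp_dist \<Omega>1 \<rho>1 z1 z2"
proof -
  have "bdd_below (hyp_length \<rho>2 ` C1_curves \<Omega>2 (f z1) (f z2))"
    using hyp_length_nonneg[OF assms(3)] by (meson bdd_belowI2)
  then have "hyp_dist \<Omega>2 \<rho>2 (f z1) (f z2) / K \<le> hyp_length \<rho>1 \<gamma>"
    if "\<gamma> \<in> C1_curves \<Omega>1 z1 z2" for \<gamma>
    using cINF_lower[of "hyp_length \<rho>2" _ "f \<circ> \<gamma>"] curves[OF that] \<open>K > 0\<close>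
    by (fastforce simp: hyp_dist_eq_INF_hyp_length pos_divide_le_eq mult.commute)
  then have "hyp_dist \<Omega>2 \<rho>2 (f z1) (f z2) / K \<le> hyp_dist \<Omega>1 \<rho>1 z1 z2"
    unfolding hyp_dist_eq_INF_hyp_length[of \<Omega>1] by (rule cINF_greatest[OF assms(2)])
  then show ?thesis
    using \<open>K > 0\<close> by (simp add: pos_divide_le_eq mult.commute)
qed

lemma hyp_length_eq_integral:
  assumes "\<And>t. t \<in> {0..1} \<Longrightarrow> (\<gamma> has_vector_derivative D t) (at t)"
  shows "hyp_length \<rho> \<gamma> = integral {0..1} (\<lambda>t. \<rho> (\<gamma> t) * cmod (D t))"
proof -
  have "vector_derivative \<gamma> (at t within {0..1}) = D t" if "t \<in> {0..1}" for t
    using assms[OF that] that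
    by (intro vector_derivative_within_closed_interval) (auto intro: has_vector_derivative_at_within)
  then show ?thesis
    unfolding hyp_length_def by (intro integral_cong) simp
qed

lemma has_vector_derivative_compose_partials:
  assumes "(\<gamma> has_vector_derivative v) (at t)" "f differentiable at (\<gamma> t)"
  shows "((f \<circ> \<gamma>) has_vector_derivative of_real (Re v) * dx f (\<gamma> t) + of_real (Im v) * dy f (\<gamma> t)) (at t)"
proof -
  obtain L where L: "(f has_derivative L) (at (\<gamma> t))"
    using assms(2) unfolding differentiable_def by blast
  have "((f \<circ> \<gamma>) has_derivative L \<circ> (\<lambda>s. s *\<^sub>R v)) (at t)"
    using assms(1) L unfolding has_vector_derivative_def by (rule diff_chain_at)
  moreover have "L \<circ> (\<lambda>s. s *\<^sub>R v) = (\<lambda>s. s *\<^sub>R L v)"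
    using has_derivative_linear[OF L] by (auto simp: linear_scale)
  ultimately show ?thesis
    unfolding has_vector_derivative_def has_derivative_eq_partials[OF L] by simp
qed

lemma norm_partials_le_Wirtinger:
  "cmod (of_real (Re v) * dx f w + of_real (Im v) * dy f w) \<le> (cmod (dz f w) + cmod (dzbar f w)) * cmod v"
  unfolding partials_eq_Wirtinger
  using norm_triangle_ineq[of "dz f w * v" "dzbar f w * cnj v"] by (simp add: norm_mult algebra_simps)

lemma hyp_length_compose_le:
  assumes f: "\<And>w. w \<in> \<Omega>1 \<Longrightarrow> f differentiable at w" "continuous_on \<Omega>1 (dx f)" "continuous_on \<Omega>1 (dy f)"
    and f_image: "f ` \<Omega>1 \<subseteq> \<Omega>2"
    and \<rho>: "continuous_on \<Omega>1 \<rho>1" "continuous_on \<Omega>2 \<rho>2" "\<And>w. w \<in> \<Omega>2 \<Longrightarrow> 0 \<le> \<rho>2 w"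
    and bound: "\<And>z. z \<in> \<Omega>1 \<Longrightarrow> \<rho>2 (f z) * (cmod (dz f z) + cmod (dzbar f z)) \<le> K * \<rho>1 z"
    and \<gamma>: "\<gamma> \<in> C1_curves \<Omega>1 z1 z2"
  shows "f \<circ> \<gamma> \<in> C1_curves \<Omega>2 (f z1) (f z2) \<and> hyp_length \<rho>2 (f \<circ> \<gamma>) \<le> K * hyp_length \<rho>1 \<gamma>"
proof -
  obtain D where D: "\<And>t. t \<in> {0..1} \<Longrightarrow> (\<gamma> has_vector_derivative D t) (at t)"
    and "continuous_on {0..1} D"
    using \<gamma> unfolding C1_curves_def C1_differentiable_on_def by blast
  have \<gamma>_sub: "\<gamma> ` {0..1} \<subseteq> \<Omega>1"
    using \<gamma> by (simp add: C1_curves_def)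
  then have \<gamma>_image: "\<gamma> t \<in> \<Omega>1" if "t \<in> {0..1}" for t
    using that by blast
  have "continuous_on {0..1} \<gamma>"
    using \<gamma> C1_differentiable_imp_continuous_on by (auto simp: C1_curves_def)
  define D' where "D' t = of_real (Re (D t)) * dx f (\<gamma> t) + of_real (Im (D t)) * dy f (\<gamma> t)" for t
  have D': "((f \<circ> \<gamma>) has_vector_derivative D' t) (at t)" if "t \<in> {0..1}" for t
    unfolding D'_def using D[OF that] f(1)[OF \<gamma>_image[OF that]] by (rule has_vector_derivative_compose_partials)
  have "continuous_on {0..1} (\<lambda>t. dx f (\<gamma> t))" "continuous_on {0..1} (\<lambda>t. dy f (\<gamma> t))"
    using continuous_on_compose2[OF f(2) \<open>continuous_on {0..1} \<gamma>\<close> \<gamma>_sub]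
      continuous_on_compose2[OF f(3) \<open>continuous_on {0..1} \<gamma>\<close> \<gamma>_sub] by auto
  then have "continuous_on {0..1} D'"
    unfolding D'_def by (intro continuous_intros \<open>continuous_on {0..1} D\<close>)
  then have "(f \<circ> \<gamma>) C1_differentiable_on {0..1}"
    using D' unfolding C1_differentiable_on_def by blast
  moreover have "(f \<circ> \<gamma>) ` {0..1} \<subseteq> \<Omega>2"
    using f_image \<gamma>_sub by (auto simp: image_comp[symmetric])
  ultimately have "f \<circ> \<gamma> \<in> C1_curves \<Omega>2 (f z1) (f z2)"
    using \<gamma> by (simp add: C1_curves_def)
  moreover have "hyp_length \<rho>2 (f \<circ> \<gamma>) \<le> K * hyp_length \<rho>1 \<gamma>"
  proof -
    have "continuous_on {0..1} (\<lambda>t. \<rho>2 (f (\<gamma> t)))"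
      using \<open>f \<circ> \<gamma> \<in> C1_curves \<Omega>2 (f z1) (f z2)\<close> C1_differentiable_imp_continuous_on
      by (intro continuous_on_compose2[OF \<rho>(2)]) (auto simp: C1_curves_def o_def)
    moreover have "continuous_on {0..1} (\<lambda>t. \<rho>1 (\<gamma> t))"
      using continuous_on_compose2[OF \<rho>(1) \<open>continuous_on {0..1} \<gamma>\<close> \<gamma>_sub] by auto
    moreover have "\<rho>2 (f (\<gamma> t)) * cmod (D' t) \<le> K * (\<rho>1 (\<gamma> t) * cmod (D t))" if "t \<in> {0..1}" for t
    proof -
      have "\<rho>2 (f (\<gamma> t)) * cmod (D' t) \<le> \<rho>2 (f (\<gamma> t)) * (cmod (dz f (\<gamma> t)) + cmod (dzbar f (\<gamma> t))) * cmod (D t)"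
        unfolding D'_def mult.assoc
        using \<rho>(3) f_image \<gamma>_image[OF that] by (intro mult_left_mono norm_partials_le_Wirtinger) auto
      also have "\<dots> \<le> K * \<rho>1 (\<gamma> t) * cmod (D t)"
        using bound[OF \<gamma>_image[OF that]] by (rule mult_right_mono) simp
      finally show ?thesis
        by (simp add: mult.assoc)
    qed
    ultimately have "integral {0..1} (\<lambda>t. \<rho>2 (f (\<gamma> t)) * cmod (D' t))
        \<le> integral {0..1} (\<lambda>t. K * (\<rho>1 (\<gamma> t) * cmod (D t)))"
      using \<open>continuous_on {0..1} D\<close> \<open>continuous_on {0..1} D'\<close>
      by (intro integral_le integrable_continuous_interval continuous_intros) auto
    moreover have "hyp_length \<rho>1 \<gamma> = integral {0..1} (\<lambda>t. \<rho>1 (\<gamma> t) * cmod (D t))"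
      by (rule hyp_length_eq_integral) (rule D)
    moreover have "hyp_length \<rho>2 (f \<circ> \<gamma>) = integral {0..1} (\<lambda>t. \<rho>2 (f (\<gamma> t)) * cmod (D' t))"
      by (subst hyp_length_eq_integral[of _ D']) (auto intro: D')
    ultimately show ?thesis
      by simp
  qed
  ultimately show ?thesis ..
qed

lemma continuous_on_rho_U: "continuous_on unit_disc rho_U"
proof -
  have "(cmod z)\<^sup>2 < 1" if "z \<in> unit_disc" for z
    using that by (simp add: unit_disc_def abs_square_less_1)
  then show ?thesis
    unfolding rho_U_def[abs_def] by (intro continuous_intros) force
qed

lemma continuous_on_rho_S: "continuous_on strip_S rho_S"
  unfolding rho_S_def[abs_def] using strip_S_cos_pos by (intro continuous_intros) force

theorem lemma4:
  fixes K :: real and f :: "complex \<Rightarrow> complex"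
  assumes "K \<ge> 1" and "f \<in> HQR K unit_disc strip_S"
  shows "\<forall>z1\<in>unit_disc. \<forall>z2\<in>unit_disc.
           hyp_dist strip_S rho_S (f z1) (f z2) \<le> K * hyp_dist unit_disc rho_U z1 z2"
proof (intro ballI)
  fix z1 z2 assume "z1 \<in> unit_disc" "z2 \<in> unit_disc"
  have f: "\<And>w. w \<in> unit_disc \<Longrightarrow> f differentiable at w" "continuous_on unit_disc (dx f)"
    "continuous_on unit_disc (dy f)" "f ` unit_disc \<subseteq> strip_S"
    using assms(2) unfolding HQR_def harmonic_on_def by auto
  show "hyp_dist strip_S rho_S (f z1) (f z2) \<le> K * hyp_dist unit_disc rho_U z1 z2"
  proof (rule hyp_dist_le_of_hyp_length_le)
    show "C1_curves unit_disc z1 z2 \<noteq> {}"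
      using linepath_in_C1_curves[OF _ \<open>z1 \<in> unit_disc\<close> \<open>z2 \<in> unit_disc\<close>]
      by (auto simp: unit_disc_eq_ball)
    show "f \<circ> \<gamma> \<in> C1_curves strip_S (f z1) (f z2) \<and>
        hyp_length rho_S (f \<circ> \<gamma>) \<le> K * hyp_length rho_U \<gamma>"
      if "\<gamma> \<in> C1_curves unit_disc z1 z2" for \<gamma>
      using f continuous_on_rho_U continuous_on_rho_S rho_S_pos HQR_rho_S_max_stretch_le[OF _ assms(2)] \<open>K \<ge> 1\<close> that
      by (intro hyp_length_compose_le) (auto intro: less_imp_le)
  qed (use \<open>K \<ge> 1\<close> rho_S_pos in \<open>auto intro: less_imp_le\<close>)
qed

end
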